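(* Let $M(n)$ denote the maximum cardinality of a set $\mathsf{B}\subseteq\{0,1\}^n$ such that any two distinct strings $\mathbf{x},\mathbf{y}\in\mathsf{B}$ have a skewincidence. Then for all sufficiently large $n$, $$2^n-2^{0.96n}\le M(n)\le 2^n-2^{0.69n}.$$
   Context: Two binary strings $\mathbf{x}=x_1\dots x_n$ and $\mathbf{y}=y_1\dots y_n$ in $\{0,1\}^n$ have a skew coincidence (skewincidence) if there is a coordinate $i\in[n-1]$ with $x_i=y_{i+1}=1$ or $x_{i+1}=y_i=1$. *)

theory Defs
  imports Complex_Main
begin

text \<open>Binary strings of length n are modelled as bool lists of length n
  (True = 1). Positions are 0-based: the paper's coordinate i in [n-1]
  corresponds to list index i-1, so pairs (i, i+1) with i + 1 < n.\<close>

definition binstrings :: "nat \<Rightarrow> bool list set" where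
  "binstrings n = {x. length x = n}"

definition skewincident :: "bool list \<Rightarrow> bool list \<Rightarrow> bool" where
  "skewincident x y \<longleftrightarrow>
     (\<exists>i. i + 1 < length x \<and>
          ((x ! i \<and> y ! (i + 1)) \<or> (x ! (i + 1) \<and> y ! i)))"

definition skew_family :: "nat \<Rightarrow> bool list set \<Rightarrow> bool" where
  "skew_family n B \<longleftrightarrow> B \<subseteq> binstrings n \<and>
     (\<forall>x\<in>B. \<forall>y\<in>B. x \<noteq> y \<longrightarrow> skewincident x y)"

definition M :: "nat \<Rightarrow> nat" where
  "M n = Max {card B | B. skew_family n B}"

end

theory Submission
  imports Defs
begin

text \<open>Upper bound: for \<open>z\<close> with no two adjacent ones, \<open>10z\<close> and \<open>00z\<close> have no
  skewincidence, so a skew family misses one string of each such pair. These \<open>z\<close> are counted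
  by Fibonacci numbers, which grow like \<open>1.618^n > 2^(0.69 n)\<close>.

  Lower bound: summing a fixed weight over all windows of length 5 gives a score such that
  \<open>score x + score y \<le> 6 n + O(1)\<close> whenever \<open>x\<close> and \<open>y\<close> have no skewincidence. Hence
  the strings scoring above \<open>3 n + O(1)\<close> form a skew family, and an exponential moment bound,
  computed with a transfer matrix, shows that fewer than \<open>2^(0.96 n)\<close> strings score lower.\<close>

lemma finite_binstrings: "finite (binstrings n)"
  using finite_lists_length_eq[of "UNIV :: bool set" n] by (simp add: binstrings_def)

lemma card_binstrings: "card (binstrings n) = 2 ^ n"
  using card_lists_length_eq[of "UNIV :: bool set" n] by (simp add: binstrings_def)

lemma sum_binstrings_Suc:
  "sum g (binstrings (Suc m)) = sum (\<lambda>y. g (True # y)) (binstrings m) + sum (\<lambda>y. g (False # y)) (binstrings m)"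
proof -
  have "binstrings (Suc m) = Cons True ` binstrings m \<union> Cons False ` binstrings m"
    by (auto simp: binstrings_def length_Suc_conv)
  then show ?thesis
    by (simp, subst sum.union_disjoint) (auto simp: finite_binstrings sum.reindex)
qed

lemma finite_skew_family_cards: "finite {card B | B. skew_family n B}"
proof (rule finite_subset)
  show "{card B | B. skew_family n B} \<subseteq> {..2 ^ n}"
    using card_mono[OF finite_binstrings] card_binstrings by (force simp: skew_family_def)
qed simp

lemma M_attained: "\<exists>B. skew_family n B \<and> card B = M n"
proof -
  have "skew_family n {}"
    by (simp add: skew_family_def)
  then have "{card B | B. skew_family n B} \<noteq> {}"
    by blast
  then show ?thesis
    using Max_in[OF finite_skew_family_cards] unfolding M_def by fastforce
qed

lemma card_le_M: "skew_family n B \<Longrightarrow> card B \<le> M n"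
  unfolding M_def by (auto intro: Max_ge[OF finite_skew_family_cards])

lemma eventually_mult_power_le:
  fixes a b K :: real
  assumes "0 < b" "b < a"
  shows "\<forall>\<^sub>F n in sequentially. K * b ^ n \<le> a ^ n"
proof -
  obtain N where N: "K < (a / b) ^ N"
    using real_arch_pow[of "a / b" K] assms by auto
  have "K * b ^ n \<le> a ^ n" if "n \<ge> N" for n
  proof -
    have "(a / b) ^ N \<le> (a / b) ^ n"
      using assms that by (intro power_increasing) auto
    with N have "K \<le> (a / b) ^ n"
      by linarith
    then have "K * b ^ n \<le> (a / b) ^ n * b ^ n"
      using assms by (intro mult_right_mono) auto
    also have "\<dots> = a ^ n"
      using assms by (simp add: power_divide)
    finally show ?thesis .
  qed
  then show ?thesis
    unfolding eventually_sequentially by blast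
qed

lemma powr_mult_of_nat: "0 < c \<Longrightarrow> (c::real) powr (r * real n) = (c powr r) ^ n"
  by (simp add: powr_powr[symmetric] powr_realpow mult.commute)


subsection \<open>Upper bound\<close>

fun no_adjacent_ones :: "bool list \<Rightarrow> bool" where
  "no_adjacent_ones (a # b # r) \<longleftrightarrow> \<not> (a \<and> b) \<and> no_adjacent_ones (b # r)"
| "no_adjacent_ones _ \<longleftrightarrow> True"

lemma no_adjacent_ones_False_Cons [simp]:
  "no_adjacent_ones (False # z) = no_adjacent_ones z"
  by (cases z) auto

lemma no_adjacent_ones_nth:
  "no_adjacent_ones xs \<Longrightarrow> i + 1 < length xs \<Longrightarrow> \<not> (xs ! i \<and> xs ! (i + 1))"
proof (induction xs arbitrary: i rule: no_adjacent_ones.induct)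
  case (1 a b r)
  then show ?case
    by (cases i) auto
qed auto

lemma not_skewincident_if_below:
  assumes "no_adjacent_ones x" "length y = length x" "\<forall>i<length x. y ! i \<longrightarrow> x ! i"
  shows "\<not> skewincident x y"
  using no_adjacent_ones_nth[OF assms(1)] assms(3) unfolding skewincident_def by fastforce

definition fib_strings :: "nat \<Rightarrow> bool list set" where
  "fib_strings m = {z. length z = m \<and> no_adjacent_ones z}"

lemma finite_fib_strings: "finite (fib_strings m)"
  by (rule finite_subset[OF _ finite_binstrings[of m]]) (auto simp: fib_strings_def binstrings_def)

lemma card_fib_strings_Suc_Suc:
  "card (fib_strings (Suc m)) + card (fib_strings m) \<le> card (fib_strings (Suc (Suc m)))"
proof -
  let ?A = "Cons False ` fib_strings (Suc m) \<union> (\<lambda>z. True # False # z) ` fib_strings m"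
  have "card ?A = card (fib_strings (Suc m)) + card (fib_strings m)"
    by (subst card_Un_disjoint) (auto simp: finite_fib_strings card_image inj_on_def)
  moreover have "?A \<subseteq> fib_strings (Suc (Suc m))"
    by (auto simp: fib_strings_def)
  ultimately show ?thesis
    using card_mono[OF finite_fib_strings] by metis
qed

lemma card_fib_strings_ge:
  fixes \<phi> :: real
  assumes "0 \<le> \<phi>" "\<phi>\<^sup>2 \<le> \<phi> + 1"
  shows "\<phi> ^ m \<le> card (fib_strings m)"
proof -
  have "\<phi> ^ m \<le> card (fib_strings m) \<and> \<phi> ^ Suc m \<le> card (fib_strings (Suc m))"
  proof (induction m)
    case 0
    have "fib_strings 0 = {[]}" "fib_strings 1 = {[True], [False]}"
      by (auto simp: fib_strings_def length_Suc_conv)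
    moreover have "\<phi> \<le> 2"
    proof (rule ccontr)
      assume "\<not> \<phi> \<le> 2"
      then have "2 * \<phi> < \<phi> * \<phi>"
        by (intro mult_strict_right_mono) auto
      then show False
        using assms \<open>\<not> \<phi> \<le> 2\<close> unfolding power2_eq_square by linarith
    qed
    ultimately show ?case
      by simp
  next
    case (Suc m)
    have "\<phi> ^ Suc (Suc m) = \<phi> ^ m * \<phi>\<^sup>2"
      by (simp add: power2_eq_square)
    also have "\<dots> \<le> \<phi> ^ m * (\<phi> + 1)"
      using assms by (intro mult_left_mono) auto
    also have "\<dots> = \<phi> ^ Suc m + \<phi> ^ m"
      by (simp add: algebra_simps)
    also have "\<dots> \<le> card (fib_strings (Suc m)) + card (fib_strings m)"
      using Suc.IH by simp
    also have "\<dots> \<le> card (fib_strings (Suc (Suc m)))"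
      using card_fib_strings_Suc_Suc[of m] by linarith
    finally show ?case
      using Suc.IH by simp
  qed
  then show ?thesis
    by simp
qed

lemma skew_family_card_add_card_fib_strings_le:
  assumes "skew_family (m + 2) B"
  shows "card B + card (fib_strings m) \<le> 2 ^ (m + 2)"
proof -
  have B: "B \<subseteq> binstrings (m + 2)" and skew: "\<And>x y. x \<in> B \<Longrightarrow> y \<in> B \<Longrightarrow> x \<noteq> y \<Longrightarrow> skewincident x y"
    using assms by (auto simp: skew_family_def)
  define g where "g z = (if False # False # z \<in> B then True # False # z else False # False # z)" for z
  have not_skew: "\<not> skewincident (True # False # z) (False # False # z)" if "z \<in> fib_strings m" for z
    using that by (intro not_skewincident_if_below) (auto simp: fib_strings_def nth_Cons split: nat.split)
  have "g ` fib_strings m \<subseteq> binstrings (m + 2) - B"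
    using not_skew skew by (auto simp: g_def binstrings_def fib_strings_def)
  moreover have "inj_on g (fib_strings m)"
    by (auto simp: inj_on_def g_def split: if_splits)
  ultimately have "card (fib_strings m) \<le> card (binstrings (m + 2) - B)"
    by (metis card_image card_mono finite_Diff finite_binstrings)
  also have "\<dots> = 2 ^ (m + 2) - card B"
    using B by (simp add: card_Diff_subset finite_subset[OF B finite_binstrings] card_binstrings)
  finally show ?thesis
    using card_mono[OF finite_binstrings B] card_binstrings[of "m + 2"] by linarith
qed

lemma eventually_M_le:
  fixes q \<phi> :: real
  assumes "0 < q" "q < \<phi>" "\<phi>\<^sup>2 \<le> \<phi> + 1"
  shows "\<forall>\<^sub>F n in sequentially. real (M n) \<le> 2 ^ n - q ^ n"
proof -
  have "\<forall>\<^sub>F m in sequentially. real (M (m + 2)) \<le> 2 ^ (m + 2) - q ^ (m + 2)"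
    using eventually_mult_power_le[OF assms(1,2), of "\<phi>\<^sup>2"]
  proof eventually_elim
    case (elim m)
    obtain B where B: "skew_family (m + 2) B" "card B = M (m + 2)"
      using M_attained by blast
    have "M (m + 2) + card (fib_strings m) \<le> 2 ^ (m + 2)"
      using skew_family_card_add_card_fib_strings_le[OF B(1)] B(2) by simp
    then have "real (M (m + 2)) + card (fib_strings m) \<le> 2 ^ (m + 2)"
      by (metis of_nat_add of_nat_le_iff of_nat_numeral of_nat_power)
    moreover have "q ^ (m + 2) \<le> \<phi> ^ m"
    proof -
      have "q ^ (m + 2) = q\<^sup>2 * q ^ m"
        by (simp only: power_add mult.commute)
      also have "\<dots> \<le> \<phi>\<^sup>2 * q ^ m"
        using assms by (intro mult_right_mono power_mono) auto
      finally show ?thesis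
        using elim by linarith
    qed
    moreover have "\<phi> ^ m \<le> card (fib_strings m)"
      using assms by (intro card_fib_strings_ge) auto
    ultimately show ?case
      by linarith
  qed
  then show ?thesis
    using eventually_sequentially_seg[where P = "\<lambda>n. real (M n) \<le> 2 ^ n - q ^ n"] by blast
qed

lemma two_powr_069_less: "2 powr (0.69 :: real) < 1.618"
proof -
  have "(2 powr (0.69 :: real)) ^ 100 = 2 ^ 69"
    by (simp add: powr_realpow[symmetric] powr_powr)
  also have "\<dots> < (1.618 :: real) ^ 100"
    by (simp add: power_divide)
  finally show ?thesis
    by (rule power_less_imp_less_base) simp
qed

lemma M_upper: "\<forall>\<^sub>F n in sequentially. real (M n) \<le> 2 ^ n - 2 powr (0.69 * real n)"
proof -
  have powr_eq: "2 powr (0.69 * real n) = (2 powr 0.69) ^ n" for n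
    by (rule powr_mult_of_nat) simp
  show ?thesis
    using eventually_M_le[OF _ two_powr_069_less] unfolding powr_eq by (simp add: power2_eq_square)
qed


subsection \<open>Lower bound\<close>

text \<open>The three tables below form a certificate found by computer search. Table entries are
  indexed by \<open>bits_index\<close>, reading a window as a big-endian binary numeral with \<open>True\<close>
  as 1.\<close>

definition bits_index :: "bool list \<Rightarrow> nat" where
  "bits_index = foldl (\<lambda>k b. 2 * k + of_bool b) 0"

definition window_score :: "bool \<Rightarrow> bool \<Rightarrow> bool \<Rightarrow> bool \<Rightarrow> bool \<Rightarrow> int" where
  "window_score a b c d e =
    [ 0, 0, 4, 3, 3, 3, 7, 7, 4, 3, 3, 2, 7, 6, 6, 6,
     -1, 1, 3, 5, 3, 3, 7, 7, 2, 4, 2, 5, 7, 6, 6, 6] ! bits_index [a, b, c, d, e]"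

text \<open>A potential on pairs of 4-prefixes that makes the pair inequality telescope.\<close>

definition pair_potential ::
    "bool \<Rightarrow> bool \<Rightarrow> bool \<Rightarrow> bool \<Rightarrow> bool \<Rightarrow> bool \<Rightarrow> bool \<Rightarrow> bool \<Rightarrow> int" where
  "pair_potential a b c d a' b' c' d' =
    [[0, 0, 0, 3, 0, 0, 2, 2, 0, 2, 0, 3, 1, 2, 2, 2],
     [0, 4, 0, 0, 3, 3, 0, 0, 0, 3, 0, 0, 1, 2, 0, 0],
     [0, 0, 2, 0, 0, 0, 0, 0, 1, 0, 2, 0, 0, 0, 0, 0],
     [3, 0, 0, 0, 0, 0, 0, 0, 2, 0, 0, 0, 0, 0, 0, 0],
     [0, 3, 0, 0, 2, 2, 0, 0, 0, 0, 0, 0, 0, 0, 0, 0],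
     [0, 3, 0, 0, 2, 2, 0, 0, 0, 0, 0, 0, 0, 0, 0, 0],
     [2, 0, 0, 0, 0, 0, 0, 0, 0, 0, 0, 0, 0, 0, 0, 0],
     [2, 0, 0, 0, 0, 0, 0, 0, 0, 0, 0, 0, 0, 0, 0, 0],
     [0, 0, 1, 2, 0, 0, 0, 0, 0, 1, 1, 2, 0, 0, 0, 0],
     [2, 3, 0, 0, 0, 0, 0, 0, 1, 2, 0, 0, 0, 0, 0, 0],
     [0, 0, 2, 0, 0, 0, 0, 0, 1, 0, 2, 0, 0, 0, 0, 0],
     [3, 0, 0, 0, 0, 0, 0, 0, 2, 0, 0, 0, 0, 0, 0, 0],
     [1, 1, 0, 0, 0, 0, 0, 0, 0, 0, 0, 0, 0, 0, 0, 0],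
     [2, 2, 0, 0, 0, 0, 0, 0, 0, 0, 0, 0, 0, 0, 0, 0],
     [2, 0, 0, 0, 0, 0, 0, 0, 0, 0, 0, 0, 0, 0, 0, 0],
     [2, 0, 0, 0, 0, 0, 0, 0, 0, 0, 0, 0, 0, 0, 0, 0]]
    ! bits_index [a, b, c, d] ! bits_index [a', b', c', d']"

text \<open>A positive vector that the transfer matrix with entries \<open>moment_base ^ nat (14 - 2 *
  window_score a b c d e)\<close>, from state \<open>abcd\<close> to state \<open>bcde\<close>, scales by at most
  \<open>moment_growth\<close>.\<close>

definition moment_vector :: "bool \<Rightarrow> bool \<Rightarrow> bool \<Rightarrow> bool \<Rightarrow> real" where
  "moment_vector a b c d =
    [286, 148, 197, 101, 219, 160, 155, 109, 294, 148, 197, 101, 237, 156, 155, 109]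
    ! bits_index [a, b, c, d]"

definition moment_base :: real where
  "moment_base = 26 / 25"

definition moment_growth :: real where
  "moment_growth = 1317 / 500"

text \<open>The finite checks on the tables are stated with explicit quantifiers over \<open>bool\<close>
  so that \<open>code_simp\<close> can evaluate them.\<close>

lemma window_score_le: "window_score a b c d e \<le> 7"
proof -
  have "\<forall>a b c d e. window_score a b c d e \<le> 7"
    by code_simp
  from this[rule_format] show ?thesis .
qed

lemma pair_potential_bounds: "0 \<le> pair_potential a b c d a' b' c' d' \<and> pair_potential a b c d a' b' c' d' \<le> 4"
proof -
  have "\<forall>a b c d a' b' c' d'. 0 \<le> pair_potential a b c d a' b' c' d' \<and> pair_potential a b c d a' b' c' d' \<le> 4"
    by code_simp
  from this[rule_format] show ?thesis .
qed

lemma window_score_add_pair_potential_le: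
  assumes "\<not> (a \<and> b2)" "\<not> (a2 \<and> b)" "\<not> (a2 \<and> b3)" "\<not> (a3 \<and> b2)"
    "\<not> (a3 \<and> b4)" "\<not> (a4 \<and> b3)" "\<not> (a4 \<and> b5)" "\<not> (a5 \<and> b4)"
  shows "window_score a a2 a3 a4 a5 + window_score b b2 b3 b4 b5 + pair_potential a2 a3 a4 a5 b2 b3 b4 b5
    \<le> 6 + pair_potential a a2 a3 a4 b b2 b3 b4"
proof -
  have "\<forall>a a2 a3 a4 a5 b b2 b3 b4 b5.
      \<not> (a \<and> b2) \<longrightarrow> \<not> (a2 \<and> b) \<longrightarrow> \<not> (a2 \<and> b3) \<longrightarrow> \<not> (a3 \<and> b2) \<longrightarrow>
      \<not> (a3 \<and> b4) \<longrightarrow> \<not> (a4 \<and> b3) \<longrightarrow> \<not> (a4 \<and> b5) \<longrightarrow> \<not> (a5 \<and> b4) \<longrightarrow>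
      window_score a a2 a3 a4 a5 + window_score b b2 b3 b4 b5 + pair_potential a2 a3 a4 a5 b2 b3 b4 b5
        \<le> 6 + pair_potential a a2 a3 a4 b b2 b3 b4"
    by code_simp
  from this[rule_format, OF assms] show ?thesis .
qed

lemma moment_vector_ge_one: "1 \<le> moment_vector a b c d"
proof -
  have "\<forall>a b c d. 1 \<le> moment_vector a b c d"
    by code_simp
  from this[rule_format] show ?thesis .
qed

lemma moment_vector_step:
  "moment_base ^ nat (14 - 2 * window_score a b c d True) * moment_vector b c d True
   + moment_base ^ nat (14 - 2 * window_score a b c d False) * moment_vector b c d False
   \<le> moment_growth * moment_vector a b c d"
proof -
  have "\<forall>a b c d.
      moment_base ^ nat (14 - 2 * window_score a b c d True) * moment_vector b c d True
      + moment_base ^ nat (14 - 2 * window_score a b c d False) * moment_vector b c d False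
      \<le> moment_growth * moment_vector a b c d"
    by code_simp
  from this[rule_format] show ?thesis .
qed

fun score :: "bool list \<Rightarrow> int" where
  "score (a # b # c # d # e # r) = window_score a b c d e + score (b # c # d # e # r)"
| "score _ = 0"

fun deficit :: "bool list \<Rightarrow> nat" where
  "deficit (a # b # c # d # e # r) = nat (14 - 2 * window_score a b c d e) + deficit (b # c # d # e # r)"
| "deficit _ = 0"

lemma deficit_eq_score: "4 \<le> length x \<Longrightarrow> int (deficit x) = 14 * (int (length x) - 4) - 2 * score x"
proof (induction x rule: score.induct)
  case (1 a b c d e r)
  then show ?case
    using window_score_le[of a b c d e] by auto
qed auto

lemma skewincident_Cons_Cons:
  "skewincident (a # b # r) (a' # b' # r') \<longleftrightarrow> a \<and> b' \<or> b \<and> a' \<or> skewincident (b # r) (b' # r')"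
proof
  assume "skewincident (a # b # r) (a' # b' # r')"
  then obtain i where "i + 1 < length (a # b # r)"
    "(a # b # r) ! i \<and> (a' # b' # r') ! (i + 1) \<or> (a # b # r) ! (i + 1) \<and> (a' # b' # r') ! i"
    unfolding skewincident_def by blast
  then show "a \<and> b' \<or> b \<and> a' \<or> skewincident (b # r) (b' # r')"
    unfolding skewincident_def by (cases i) auto
next
  assume "a \<and> b' \<or> b \<and> a' \<or> skewincident (b # r) (b' # r')"
  then show "skewincident (a # b # r) (a' # b' # r')"
  proof (elim disjE)
    assume "skewincident (b # r) (b' # r')"
    then obtain j where "j + 1 < length (b # r)"
      "(b # r) ! j \<and> (b' # r') ! (j + 1) \<or> (b # r) ! (j + 1) \<and> (b' # r') ! j"
      unfolding skewincident_def by blast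
    then show ?thesis
      unfolding skewincident_def by (intro exI[of _ "Suc j"]) auto
  qed (auto simp: skewincident_def intro: exI[of _ 0])
qed

lemma score_add_score_le:
  "length x = length y \<Longrightarrow> 4 \<le> length x \<Longrightarrow> \<not> skewincident x y \<Longrightarrow>
   score x + score y \<le> 6 * (int (length x) - 4) + pair_potential (x!0) (x!1) (x!2) (x!3) (y!0) (y!1) (y!2) (y!3)"
proof (induction x arbitrary: y rule: score.induct)
  case (1 a b c d e r)
  obtain a' b' c' d' e' r' where y: "y = a' # b' # c' # d' # e' # r'" "length r' = length r"
    using "1.prems"(1)[symmetric] by (auto simp: length_Suc_conv)
  have "\<not> skewincident (b # c # d # e # r) (b' # c' # d' # e' # r')"
    and no_skew: "\<not> (a \<and> b')" "\<not> (b \<and> a')" "\<not> (b \<and> c')" "\<not> (c \<and> b')"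
      "\<not> (c \<and> d')" "\<not> (d \<and> c')" "\<not> (d \<and> e')" "\<not> (e \<and> d')"
    using "1.prems"(3) unfolding y by (simp_all add: skewincident_Cons_Cons)
  then have "score (b # c # d # e # r) + score (b' # c' # d' # e' # r')
      \<le> 6 * int (length r) + pair_potential b c d e b' c' d' e'"
    using "1.IH"[of "b' # c' # d' # e' # r'"] y(2) by simp
  moreover have "window_score a b c d e + window_score a' b' c' d' e' + pair_potential b c d e b' c' d' e'
      \<le> 6 + pair_potential a b c d a' b' c' d'"
    using no_skew by (rule window_score_add_pair_potential_le)
  ultimately show ?case
    unfolding y by simp
next
  case ("2_5" a b c d)
  then have "length y = 4"
    by simp
  then obtain a' b' c' d' where "y = [a', b', c', d']"
    by (auto simp: length_Suc_conv numeral_eq_Suc)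
  then show ?case
    using pair_potential_bounds by simp
qed auto

lemma skew_family_high_score:
  "skew_family (m + 4) {x \<in> binstrings (m + 4). 3 * int m + 2 < score x}"
  unfolding skew_family_def
proof (intro conjI ballI impI)
  fix x y
  assume "x \<in> {x \<in> binstrings (m + 4). 3 * int m + 2 < score x}"
    and "y \<in> {x \<in> binstrings (m + 4). 3 * int m + 2 < score x}"
  then have len: "length x = m + 4" "length y = m + 4" and high: "3 * int m + 2 < score x" "3 * int m + 2 < score y"
    by (auto simp: binstrings_def)
  show "skewincident x y"
  proof (rule ccontr)
    assume "\<not> skewincident x y"
    then have "score x + score y \<le> 6 * int m + pair_potential (x!0) (x!1) (x!2) (x!3) (y!0) (y!1) (y!2) (y!3)"
      using score_add_score_le[of x y] len by simp
    moreover have "pair_potential (x!0) (x!1) (x!2) (x!3) (y!0) (y!1) (y!2) (y!3) \<le> 4"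
      using pair_potential_bounds by blast
    ultimately show False
      using high by linarith
  qed
qed blast

lemma sum_moment_prefix_le:
  "(\<Sum>y\<in>binstrings m. moment_base ^ deficit ([a, b, c, d] @ y)) \<le> moment_vector a b c d * moment_growth ^ m"
proof (induction m arbitrary: a b c d)
  case 0
  have "binstrings 0 = {[]}"
    by (auto simp: binstrings_def)
  then show ?case
    using moment_vector_ge_one[of a b c d] by simp
next
  case (Suc m)
  let ?w = "\<lambda>e. moment_base ^ nat (14 - 2 * window_score a b c d e)"
  have "(\<Sum>y\<in>binstrings (Suc m). moment_base ^ deficit ([a, b, c, d] @ y))
      = ?w True * (\<Sum>y\<in>binstrings m. moment_base ^ deficit ([b, c, d, True] @ y))
      + ?w False * (\<Sum>y\<in>binstrings m. moment_base ^ deficit ([b, c, d, False] @ y))"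
    unfolding sum_binstrings_Suc by (simp add: power_add sum_distrib_left)
  also have "\<dots> \<le> ?w True * (moment_vector b c d True * moment_growth ^ m)
      + ?w False * (moment_vector b c d False * moment_growth ^ m)"
    by (intro add_mono mult_left_mono Suc.IH) (simp_all add: moment_base_def)
  also have "\<dots> = (?w True * moment_vector b c d True + ?w False * moment_vector b c d False) * moment_growth ^ m"
    by (simp add: algebra_simps)
  also have "\<dots> \<le> moment_growth * moment_vector a b c d * moment_growth ^ m"
    by (intro mult_right_mono moment_vector_step) (simp add: moment_growth_def)
  finally show ?case
    by (simp add: algebra_simps)
qed

lemma sum_moment_le: "(\<Sum>x\<in>binstrings (m + 4). moment_base ^ deficit x) \<le> 2772 * moment_growth ^ m"
proof -
  have "(\<Sum>x\<in>binstrings (m + 4). moment_base ^ deficit x)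
      = (\<Sum>a\<in>UNIV. \<Sum>b\<in>UNIV. \<Sum>c\<in>UNIV. \<Sum>d\<in>UNIV. \<Sum>y\<in>binstrings m. moment_base ^ deficit ([a, b, c, d] @ y))"
    by (simp add: sum_binstrings_Suc UNIV_bool eval_nat_numeral)
  also have "\<dots> \<le> (\<Sum>a\<in>UNIV. \<Sum>b\<in>UNIV. \<Sum>c\<in>UNIV. \<Sum>d\<in>UNIV. moment_vector a b c d * moment_growth ^ m)"
    by (intro sum_mono sum_moment_prefix_le)
  also have "\<dots> = 2772 * moment_growth ^ m"
    by (simp add: UNIV_bool moment_vector_def bits_index_def algebra_simps)
  finally show ?thesis .
qed

lemma card_low_score_le:
  "card {x \<in> binstrings (m + 4). score x \<le> 3 * int m + 2}
    \<le> moment_base ^ 4 * 2772 * (moment_growth / moment_base ^ 8) ^ m"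
proof -
  let ?low = "{x \<in> binstrings (m + 4). score x \<le> 3 * int m + 2}"
  have "card ?low * moment_base ^ (8 * m) = (\<Sum>x\<in>?low. moment_base ^ (8 * m))"
    by simp
  also have "\<dots> \<le> (\<Sum>x\<in>?low. moment_base ^ 4 * moment_base ^ deficit x)"
  proof (rule sum_mono)
    fix x
    assume "x \<in> ?low"
    then have "8 * m \<le> 4 + deficit x"
      using deficit_eq_score[of x] by (simp add: binstrings_def)
    then show "moment_base ^ (8 * m) \<le> moment_base ^ 4 * moment_base ^ deficit x"
      unfolding power_add[symmetric] by (rule power_increasing) (simp add: moment_base_def)
  qed
  also have "\<dots> \<le> (\<Sum>x\<in>binstrings (m + 4). moment_base ^ 4 * moment_base ^ deficit x)"
    by (rule sum_mono2[OF finite_binstrings]) (auto simp: moment_base_def)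
  also have "\<dots> \<le> moment_base ^ 4 * (2772 * moment_growth ^ m)"
    unfolding sum_distrib_left[symmetric] by (intro mult_left_mono sum_moment_le) (simp add: moment_base_def)
  finally have "card ?low * moment_base ^ (8 * m) \<le> moment_base ^ 4 * (2772 * moment_growth ^ m)" .
  moreover have pos: "0 < moment_base ^ (8 * m)"
    by (simp add: moment_base_def)
  ultimately have "card ?low \<le> moment_base ^ 4 * (2772 * moment_growth ^ m) / moment_base ^ (8 * m)"
    by (simp only: pos_le_divide_eq[OF pos])
  also have "\<dots> = moment_base ^ 4 * 2772 * (moment_growth / moment_base ^ 8) ^ m"
    by (simp add: power_divide power_mult)
  finally show ?thesis .
qed

lemma moment_growth_less: "moment_growth / moment_base ^ 8 < 2 powr (0.96 :: real)"
proof -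
  have "(moment_growth / moment_base ^ 8) ^ 25 < 2 ^ 24"
    by (simp add: moment_growth_def moment_base_def power_divide)
  also have "\<dots> = (2 powr (0.96 :: real)) ^ 25"
    by (simp add: powr_realpow[symmetric] powr_powr)
  finally show ?thesis
    by (rule power_less_imp_less_base) simp
qed

lemma M_lower: "\<forall>\<^sub>F n in sequentially. 2 ^ n - 2 powr (0.96 * real n) \<le> real (M n)"
proof -
  have "\<forall>\<^sub>F m in sequentially.
      moment_base ^ 4 * 2772 * (moment_growth / moment_base ^ 8) ^ m \<le> (2 powr (0.96 :: real)) ^ m"
    by (rule eventually_mult_power_le[OF _ moment_growth_less]) (simp add: moment_growth_def moment_base_def)
  then have "\<forall>\<^sub>F m in sequentially. 2 ^ (m + 4) - 2 powr (0.96 * real (m + 4)) \<le> real (M (m + 4))"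
  proof eventually_elim
    case (elim m)
    let ?low = "{x \<in> binstrings (m + 4). score x \<le> 3 * int m + 2}"
    have "binstrings (m + 4) - ?low = {x \<in> binstrings (m + 4). 3 * int m + 2 < score x}"
      by auto
    then have "card (binstrings (m + 4) - ?low) \<le> M (m + 4)"
      using card_le_M skew_family_high_score by metis
    moreover have "card (binstrings (m + 4) - ?low) = 2 ^ (m + 4) - card ?low"
      by (subst card_Diff_subset) (auto intro: finite_subset[OF _ finite_binstrings] simp: card_binstrings)
    ultimately have "2 ^ (m + 4) \<le> M (m + 4) + card ?low"
      by simp
    then have "2 ^ (m + 4) \<le> real (M (m + 4)) + card ?low"
      by (metis of_nat_add of_nat_le_iff of_nat_numeral of_nat_power)
    moreover have "card ?low \<le> (2 powr (0.96 :: real)) ^ (m + 4)"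
    proof -
      have "card ?low \<le> (2 powr (0.96 :: real)) ^ m"
        using card_low_score_le[of m] elim by linarith
      also have "\<dots> \<le> (2 powr 0.96) ^ (m + 4)"
        by (rule power_increasing) (auto intro: ge_one_powr_ge_zero)
      finally show ?thesis .
    qed
    moreover have "2 powr (0.96 * real (m + 4)) = (2 powr 0.96) ^ (m + 4)"
      by (rule powr_mult_of_nat) simp
    ultimately show ?case
      by linarith
  qed
  then show ?thesis
    using eventually_sequentially_seg[where P = "\<lambda>n. 2 ^ n - 2 powr (0.96 * real n) \<le> real (M n)"] by blast
qed

theorem theorem1:
  shows "\<exists>N. \<forall>n\<ge>N.
           2 ^ n - 2 powr (0.96 * real n) \<le> real (M n) \<and>
           real (M n) \<le> 2 ^ n - 2 powr (0.69 * real n)"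
  using eventually_conj[OF M_lower M_upper] unfolding eventually_sequentially .

end
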